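(* For every positive integer $s$, $$\Big(\mathcal{D}_s\big(\Psi_{2s-1}(\mathbf{x}*\mathbf{y};t)\big)\Big)\Big|_{\mathbf{y}=0}=0,$$ where $\mathbf{x}=(x_1,\dots,x_s)$, $\mathbf{y}=(y_1,\dots,y_{s-1})$, $\mathbf{x}*\mathbf{y}=(x_1,y_1,\dots,x_{s-1},y_{s-1},x_s)$, and $$\mathcal{D}_s=\frac{\partial^s}{\partial x_1\cdots\partial x_s}-\prod_{i=1}^{s-1}\Big(\frac{\partial}{\partial x_i}+\frac{\partial}{\partial x_{i+1}}+t\frac{\partial}{\partial y_i}\Big).$$ Equivalently, $\frac{\partial^s}{\partial x_1\cdots\partial x_s}\Psi_s(\mathbf{x};t)=\Big(\prod_{i=1}^{s-1}\big(\frac{\partial}{\partial x_i}+\frac{\partial}{\partial x_{i+1}}+t\frac{\partial}{\partial y_i}\big)\Psi_{2s-1}(\mathbf{x}*\mathbf{y};t)\Big)\Big|_{\mathbf{y}=0}$.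
   Context: Ladder diagrams: $Q^+$ is the directed graph on $\mathbb{Z}_{\ge0}^2$ with edges $((i,j),(i,j+1))$ and $((i,j),(i+1,j))$. For a sequence $\mathbf{k}=(k_1,\dots,k_s)$ of positive integers with sum $n$, let $n_0=0$, $n_i=\sum_{j\le i}k_j$, $T_{\mathbf{k}}=\{(n_\ell,n-n_\ell):0\le\ell\le s\}$ (terminal vertices), and $\Gamma_{\mathbf{k}}$ the induced subgraph of $Q^+$ on $\{(a,b):a\le c,b\le d\text{ for some }(c,d)\in T_{\mathbf{k}}\}$. For a sequence of nonnegative integers, $\Gamma_{\mathbf{k}}$ is defined as $\Gamma$ of the subsequence of its positive entries (for the all-zero sequence this is the single vertex $(0,0)$, which is also its unique terminal vertex). A positive path is a shortest directed path from $(0,0)$ to a terminal vertex; a face of $\Gamma_{\mathbf{k}}$ is a subgraph containing all terminal vertices which is a union of positive paths; its dimension is $\operatorname{rank}H_1$ of it as a 1-dimensional CW complex. The $f$-polynomial is $F_{\mathbf{k}}(t)=\sum_\gamma t^{\dim\gamma}$ over all faces $\gamma$ of $\Gamma_{\mathbf{k}}$ (by Theorem 1.1, this is also the $f$-polynomial of the corresponding Gelfand–Cetlin polytope). The exponential generating function is the formal power series $\Psi_s(x_1,\dots,x_s;t)=\sum_{\mathbf{k}\in\mathbb{Z}_{\ge0}^s}F_{\mathbf{k}}(t)\frac{x_1^{k_1}\cdots x_s^{k_s}}{k_1!\cdots k_s!}$. *)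

theory Defs
  imports "HOL-Computational_Algebra.Polynomial"
begin

type_synonym vert = "nat \<times> nat"

definition pos_part :: "nat list \<Rightarrow> nat list" where
  "pos_part k = filter (\<lambda>x. 0 < x) k"

definition terminals :: "nat list \<Rightarrow> vert set" where
  "terminals k = (let kp = pos_part k; n = sum_list kp in
      {(sum_list (take l kp), n - sum_list (take l kp)) | l. l \<le> length kp})"

definition lverts :: "nat list \<Rightarrow> vert set" where
  "lverts k = {(a, b). \<exists>(c, d) \<in> terminals k. a \<le> c \<and> b \<le> d}"

definition Qplus_edge :: "vert \<Rightarrow> vert \<Rightarrow> bool" where
  "Qplus_edge u v \<longleftrightarrow> (fst v = fst u \<and> snd v = Suc (snd u)) \<or> (fst v = Suc (fst u) \<and> snd v = snd u)"

definition ledges :: "nat list \<Rightarrow> (vert \<times> vert) set" where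
  "ledges k = {(u, v). u \<in> lverts k \<and> v \<in> lverts k \<and> Qplus_edge u v}"

definition path_edges :: "vert list \<Rightarrow> (vert \<times> vert) set" where
  "path_edges ps = set (zip ps (tl ps))"

definition dpath :: "nat list \<Rightarrow> vert list \<Rightarrow> vert \<Rightarrow> vert \<Rightarrow> bool" where
  "dpath k ps u v \<longleftrightarrow> ps \<noteq> [] \<and> hd ps = u \<and> last ps = v \<and> set ps \<subseteq> lverts k
      \<and> path_edges ps \<subseteq> ledges k"

definition positive_path :: "nat list \<Rightarrow> vert list \<Rightarrow> bool" where
  "positive_path k ps \<longleftrightarrow> last ps \<in> terminals k \<and> dpath k ps (0, 0) (last ps)
      \<and> (\<forall>qs. dpath k qs (0, 0) (last ps) \<longrightarrow> length ps \<le> length qs)"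

definition is_face :: "nat list \<Rightarrow> vert set \<times> (vert \<times> vert) set \<Rightarrow> bool" where
  "is_face k \<gamma> \<longleftrightarrow> (\<exists>S. (\<forall>ps \<in> S. positive_path k ps)
       \<and> fst \<gamma> = (\<Union>ps \<in> S. set ps) \<and> snd \<gamma> = (\<Union>ps \<in> S. path_edges ps))
     \<and> terminals k \<subseteq> fst \<gamma>"

definition comp_rel :: "vert set \<times> (vert \<times> vert) set \<Rightarrow> vert rel" where
  "comp_rel \<gamma> = {(u, v). u \<in> fst \<gamma> \<and> v \<in> fst \<gamma> \<and> (u, v) \<in> (snd \<gamma> \<union> (snd \<gamma>)\<inverse>)\<^sup>*}"

text \<open>rank H_1 of a finite 1-dimensional CW complex: #E - #V + #components.\<close>
definition face_dim :: "vert set \<times> (vert \<times> vert) set \<Rightarrow> nat" where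
  "face_dim \<gamma> = card (snd \<gamma>) + card (fst \<gamma> // comp_rel \<gamma>) - card (fst \<gamma>)"

definition fpoly :: "nat list \<Rightarrow> int poly" where
  "fpoly k = (\<Sum>\<gamma> \<in> {\<gamma>. is_face k \<gamma>}. monom 1 (face_dim \<gamma>))"

text \<open>A formal power series in m variables is represented by its coefficient function
  on exponent vectors (lists of length m); values on other lists are irrelevant.\<close>
type_synonym mser = "nat list \<Rightarrow> rat poly"

definition Psi :: "nat \<Rightarrow> mser" where
  "Psi m = (\<lambda>k. if length k = m
      then smult (inverse (of_nat (prod_list (map fact k)))) (map_poly of_int (fpoly k))
      else 0)"

text \<open>Partial derivative with respect to the variable at (0-based) position p.\<close>
definition pd :: "nat \<Rightarrow> mser \<Rightarrow> mser" where
  "pd p f = (\<lambda>k. smult (of_nat (Suc (k ! p))) (f (k[p := Suc (k ! p)])))"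

text \<open>In Psi_(2s-1)(x*y), x_i (1-based) sits at position 2(i-1) and y_i at position 2i-1.\<close>
definition Dx :: "nat \<Rightarrow> mser \<Rightarrow> mser" where
  "Dx s f = fold (\<lambda>i g. pd (2 * i) g) [0..<s] f"

text \<open>The factor d/dx_(j+1) + d/dx_(j+2) + t d/dy_(j+1) (0-based j).\<close>
definition factor_op :: "nat \<Rightarrow> mser \<Rightarrow> mser" where
  "factor_op j g = (\<lambda>k. pd (2 * j) g k + pd (2 * j + 2) g k + [:0, 1:] * pd (2 * j + 1) g k)"

definition Pop :: "nat \<Rightarrow> mser \<Rightarrow> mser" where
  "Pop s f = fold factor_op [0..<s - 1] f"

definition Dop :: "nat \<Rightarrow> mser \<Rightarrow> mser" where
  "Dop s f = (\<lambda>k. Dx s f k - Pop s f k)"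

text \<open>Setting y = 0: series in x_1..x_s whose coefficient at k is the coefficient at x^k y^0.\<close>
definition yzero :: "nat \<Rightarrow> mser \<Rightarrow> mser" where
  "yzero s g = (\<lambda>k. if length k = s
      then g (map (\<lambda>q. if even q then k ! (q div 2) else 0) [0..<2 * s - 1])
      else 0)"

end

(*
  Both sides are compared coefficientwise. At the exponent vector K of x * y with y = 0, the
  left-hand side has coefficient F_{K+e}/K!, where e adds 1 to every x-exponent, and expanding
  the product of the factors d/dx_i + d/dx_{i+1} + t d/dy_i writes the right-hand side as a sum
  over words c in {0, 1, 2}^(s-1) of t^(number of letters 2 in c) F_{K+deg c}/K!.

  The identity of f-polynomials behind this is a recursion over the top level. The terminal
  vertices of Gamma_{K+e} all lie on one level, and a face amounts to a choice of edges entering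
  each terminal vertex (from below, from the left, or from both) together with a face of the
  diagram one level lower whose terminal vertices are the tails of the chosen edges. Entering a
  vertex from both sides adds one to the dimension, and the lower diagram is Gamma_{K+deg c} for
  the word c recording the choices.
*)

theory Submission
  imports Defs
begin

subsection \<open>Lattice paths from the origin\<close>

definition level :: "vert \<Rightarrow> nat" where
  "level v = fst v + snd v"

definition lattice_path :: "vert list \<Rightarrow> bool" where
  "lattice_path ps \<longleftrightarrow> ps \<noteq> [] \<and> hd ps = (0, 0) \<and> (\<forall>(u, v) \<in> path_edges ps. Qplus_edge u v)"

definition down_closure :: "vert set \<Rightarrow> vert set" where
  "down_closure T = {(a, b). \<exists>(c, d) \<in> T. a \<le> c \<and> b \<le> d}"

lemma path_edges_simps [simp]:
  "path_edges [] = {}" "path_edges [a] = {}"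
  "path_edges (a # b # xs) = insert (a, b) (path_edges (b # xs))"
  by (auto simp: path_edges_def)

lemma path_edges_iff_nth:
  "(u, v) \<in> path_edges ps \<longleftrightarrow> (\<exists>i. Suc i < length ps \<and> u = ps ! i \<and> v = ps ! Suc i)"
proof
  assume "(u, v) \<in> path_edges ps"
  then obtain i where "i < length ps - 1" "u = ps ! i" "v = ps ! Suc i"
    by (auto simp: path_edges_def set_zip nth_tl)
  then show "\<exists>i. Suc i < length ps \<and> u = ps ! i \<and> v = ps ! Suc i"
    by (intro exI[of _ i]) auto
next
  assume "\<exists>i. Suc i < length ps \<and> u = ps ! i \<and> v = ps ! Suc i"
  then obtain i where "Suc i < length ps" "u = ps ! i" "v = ps ! Suc i" by blast
  then show "(u, v) \<in> path_edges ps"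
    by (auto simp: path_edges_def set_zip nth_tl intro!: exI[of _ i])
qed

lemma path_edges_snoc:
  "xs \<noteq> [] \<Longrightarrow> path_edges (xs @ [x]) = insert (last xs, x) (path_edges xs)"
  by (induction xs rule: induct_list012) auto

lemma path_edges_subset: "path_edges ps \<subseteq> set ps \<times> set ps"
  by (auto simp: path_edges_iff_nth)

lemma Qplus_edge_level: "Qplus_edge u v \<Longrightarrow> level v = Suc (level u)"
  by (auto simp: Qplus_edge_def level_def)

lemma Qplus_edge_mono: "Qplus_edge u v \<Longrightarrow> fst u \<le> fst v \<and> snd u \<le> snd v"
  by (auto simp: Qplus_edge_def)

lemma Qplus_edge_into:
  "Qplus_edge u (a, b) \<longleftrightarrow> (0 < b \<and> u = (a, b - 1)) \<or> (0 < a \<and> u = (a - 1, b))"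
  unfolding Qplus_edge_def by (cases u) auto

lemma down_closureI: "(c, d) \<in> T \<Longrightarrow> a \<le> c \<Longrightarrow> b \<le> d \<Longrightarrow> (a, b) \<in> down_closure T"
  unfolding down_closure_def by blast

lemma finite_down_closure:
  assumes "finite T"
  shows "finite (down_closure T)"
proof -
  have "down_closure T \<subseteq> (\<Union>(c, d) \<in> T. {0..c} \<times> {0..d})" unfolding down_closure_def by auto
  moreover have "finite (\<Union>(c, d) \<in> T. {0..c} \<times> {0..d})" using assms by auto
  ultimately show ?thesis by (rule finite_subset)
qed

lemma lattice_path_edge:
  "lattice_path ps \<Longrightarrow> Suc i < length ps \<Longrightarrow> Qplus_edge (ps ! i) (ps ! Suc i)"
  unfolding lattice_path_def using path_edges_iff_nth by blast

lemma lattice_path_level_nth: "lattice_path ps \<Longrightarrow> i < length ps \<Longrightarrow> level (ps ! i) = i"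
proof (induction i)
  case 0
  then show ?case by (auto simp: lattice_path_def hd_conv_nth level_def)
next
  case (Suc i)
  then show ?case using lattice_path_edge[OF Suc.prems(1), of i] Qplus_edge_level by auto
qed

lemma lattice_path_mono:
  assumes "lattice_path ps" "i \<le> j" "j < length ps"
  shows "fst (ps ! i) \<le> fst (ps ! j) \<and> snd (ps ! i) \<le> snd (ps ! j)"
  using assms(2,3)
proof (induction j)
  case (Suc j)
  then show ?case
    using Qplus_edge_mono[OF lattice_path_edge[OF assms(1), of j]] by (cases "i = Suc j") auto
qed simp

lemma lattice_path_length: "lattice_path ps \<Longrightarrow> length ps = Suc (level (last ps))"
  using lattice_path_level_nth[of ps "length ps - 1"]
  by (auto simp: lattice_path_def last_conv_nth)

lemma lattice_path_below_last:
  "lattice_path ps \<Longrightarrow> v \<in> set ps \<Longrightarrow> fst v \<le> fst (last ps) \<and> snd v \<le> snd (last ps)"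
  using lattice_path_mono[of ps _ "length ps - 1"]
  by (auto simp: in_set_conv_nth lattice_path_def last_conv_nth)

lemma lattice_path_level_le: "lattice_path ps \<Longrightarrow> v \<in> set ps \<Longrightarrow> level v \<le> level (last ps)"
  using lattice_path_below_last[of ps v] by (auto simp: level_def)

lemma lattice_path_level_eq_last:
  assumes "lattice_path ps" "v \<in> set ps" "level v = level (last ps)"
  shows "v = last ps"
proof -
  obtain i where i: "i < length ps" "v = ps ! i" using assms(2) by (auto simp: in_set_conv_nth)
  have "i = length ps - 1"
    using lattice_path_level_nth[OF assms(1) i(1)] lattice_path_length[OF assms(1)] assms(3) i(2)
    by simp
  then show ?thesis using assms(1) i(2) by (simp add: lattice_path_def last_conv_nth)
qed

lemma lattice_path_set_down_closure:
  assumes "lattice_path ps" "last ps \<in> T"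
  shows "set ps \<subseteq> down_closure T"
proof
  fix v assume "v \<in> set ps"
  then have "fst v \<le> fst (last ps)" "snd v \<le> snd (last ps)"
    using lattice_path_below_last[OF assms(1)] by auto
  then show "v \<in> down_closure T"
    using down_closureI[of "fst (last ps)" "snd (last ps)" T "fst v" "snd v"] assms(2) by simp
qed

lemma lattice_path_reaches:
  assumes "lattice_path ps" "v \<in> set ps"
  shows "((0, 0), v) \<in> (path_edges ps)\<^sup>*"
proof -
  have "((0, 0), ps ! i) \<in> (path_edges ps)\<^sup>*" if "i < length ps" for i
    using that
  proof (induction i)
    case 0
    then show ?case using assms(1) by (auto simp: lattice_path_def hd_conv_nth)
  next
    case (Suc i)
    then have "(ps ! i, ps ! Suc i) \<in> path_edges ps" using path_edges_iff_nth by blast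
    with Suc show ?case by (meson Suc_lessD rtrancl.rtrancl_into_rtrancl)
  qed
  then show ?thesis using assms(2) by (auto simp: in_set_conv_nth)
qed

lemma lattice_path_has_pred:
  assumes "lattice_path ps" "v \<in> set ps" "v \<noteq> (0, 0)"
  shows "v \<in> snd ` path_edges ps"
proof -
  obtain i where i: "i < length ps" "v = ps ! i" using assms(2) by (auto simp: in_set_conv_nth)
  have "i \<noteq> 0"
  proof
    assume "i = 0"
    then show False using assms(1,3) i by (auto simp: lattice_path_def hd_conv_nth)
  qed
  then obtain j where "i = Suc j" by (cases i) auto
  then have "(ps ! j, v) \<in> path_edges ps" unfolding path_edges_iff_nth using i by auto
  then show ?thesis by force
qed

lemma lattice_path_snoc: "lattice_path ps \<Longrightarrow> Qplus_edge (last ps) v \<Longrightarrow> lattice_path (ps @ [v])"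
  by (auto simp: lattice_path_def path_edges_snoc)

lemma lattice_path_butlast:
  assumes "lattice_path ps" "level (last ps) = m" "0 < m"
  shows "lattice_path (butlast ps)" "set ps = insert (last ps) (set (butlast ps))"
    "\<forall>v \<in> set (butlast ps). level v < m"
    "path_edges ps = insert (last (butlast ps), last ps) (path_edges (butlast ps))"
proof -
  have len: "length ps = Suc m" using lattice_path_length[OF assms(1)] assms(2) by simp
  then have ne: "butlast ps \<noteq> []" using assms(3) by (cases ps) auto
  have ps: "ps = butlast ps @ [last ps]" using assms(1) by (simp add: lattice_path_def)
  show edges: "path_edges ps = insert (last (butlast ps), last ps) (path_edges (butlast ps))"
    by (subst ps, rule path_edges_snoc[OF ne])
  have "hd (butlast ps) = hd ps" using ne by (metis hd_append2 ps)
  then show lp: "lattice_path (butlast ps)"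
    using assms(1) ne edges by (auto simp: lattice_path_def)
  show "set ps = insert (last ps) (set (butlast ps))" by (subst ps) simp
  have "level (last (butlast ps)) = m - 1" using lattice_path_length[OF lp] len by simp
  then show "\<forall>v \<in> set (butlast ps). level v < m"
    using lattice_path_level_le[OF lp] assms(3) by fastforce
qed

subsection \<open>Faces with an arbitrary set of terminal vertices\<close>

text \<open>Faces of \<open>\<Gamma>\<^sub>k\<close> only depend on its terminal vertices. Allowing any set \<open>T\<close> of
  terminal vertices is what makes the part of a face below the top level a face again.\<close>

definition face_on :: "vert set \<Rightarrow> vert set \<times> (vert \<times> vert) set \<Rightarrow> bool" where
  "face_on T \<gamma> \<longleftrightarrow> (\<exists>S. (\<forall>ps \<in> S. lattice_path ps \<and> last ps \<in> T)
       \<and> fst \<gamma> = (\<Union>ps \<in> S. set ps) \<and> snd \<gamma> = (\<Union>ps \<in> S. path_edges ps))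
     \<and> T \<subseteq> fst \<gamma>"

definition face_poly :: "vert set \<Rightarrow> int poly" where
  "face_poly T = (\<Sum>\<gamma> \<in> {\<gamma>. face_on T \<gamma>}. monom 1 (face_dim \<gamma>))"

lemma dpath_origin_iff:
  "dpath k ps (0, 0) v \<longleftrightarrow> lattice_path ps \<and> last ps = v \<and> set ps \<subseteq> lverts k"
  unfolding dpath_def lattice_path_def ledges_def using path_edges_subset by fastforce

lemma positive_path_iff: "positive_path k ps \<longleftrightarrow> lattice_path ps \<and> last ps \<in> terminals k"
  using lattice_path_set_down_closure[of ps "terminals k"] lattice_path_length
  by (auto simp: positive_path_def dpath_origin_iff lverts_def down_closure_def)

lemma fpoly_eq_face_poly: "fpoly k = face_poly (terminals k)"
proof -
  have "is_face k = face_on (terminals k)"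
    unfolding is_face_def face_on_def positive_path_iff by blast
  then show ?thesis by (simp add: fpoly_def face_poly_def)
qed

lemma face_onE:
  assumes "face_on T \<gamma>"
  obtains S where "\<forall>ps \<in> S. lattice_path ps \<and> last ps \<in> T"
    "fst \<gamma> = (\<Union>ps \<in> S. set ps)" "snd \<gamma> = (\<Union>ps \<in> S. path_edges ps)" "T \<subseteq> fst \<gamma>"
  using assms unfolding face_on_def by (elim conjE exE) (rule that)

lemma face_onI:
  assumes "\<forall>ps \<in> S. lattice_path ps \<and> last ps \<in> T"
    "fst \<gamma> = (\<Union>ps \<in> S. set ps)" "snd \<gamma> = (\<Union>ps \<in> S. path_edges ps)" "T \<subseteq> fst \<gamma>"
  shows "face_on T \<gamma>"
  using assms unfolding face_on_def by blast

lemma face_on_edge: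
  assumes "face_on T \<gamma>" "(u, v) \<in> snd \<gamma>"
  shows "u \<in> fst \<gamma>" "v \<in> fst \<gamma>" "Qplus_edge u v"
proof -
  obtain S where S: "\<forall>ps \<in> S. lattice_path ps \<and> last ps \<in> T"
    "fst \<gamma> = (\<Union>ps \<in> S. set ps)" "snd \<gamma> = (\<Union>ps \<in> S. path_edges ps)"
    using assms(1) by (rule face_onE)
  then obtain ps where ps: "ps \<in> S" "(u, v) \<in> path_edges ps" using assms(2) by auto
  then show "u \<in> fst \<gamma>" "v \<in> fst \<gamma>" using S(2) path_edges_subset[of ps] by auto
  show "Qplus_edge u v" using ps S(1) by (auto simp: lattice_path_def)
qed

lemma face_on_edges_subset:
  assumes "face_on T \<gamma>"
  shows "snd \<gamma> \<subseteq> fst \<gamma> \<times> fst \<gamma>"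
proof
  fix e assume "e \<in> snd \<gamma>"
  then show "e \<in> fst \<gamma> \<times> fst \<gamma>"
    using face_on_edge[OF assms, of "fst e" "snd e"] by (simp add: mem_Times_iff)
qed

lemma face_on_subset_down_closure:
  assumes "face_on T \<gamma>"
  shows "fst \<gamma> \<subseteq> down_closure T"
proof -
  obtain S where S: "\<forall>ps \<in> S. lattice_path ps \<and> last ps \<in> T" "fst \<gamma> = (\<Union>ps \<in> S. set ps)"
    using assms by (rule face_onE)
  show ?thesis
  proof
    fix v assume "v \<in> fst \<gamma>"
    then obtain ps where "ps \<in> S" "v \<in> set ps" using S(2) by auto
    then show "v \<in> down_closure T" using S(1) lattice_path_set_down_closure by blast
  qed
qed

lemma finite_face_on:
  assumes "face_on T \<gamma>" "finite T"
  shows "finite (fst \<gamma>)" "finite (snd \<gamma>)"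
proof -
  show fin: "finite (fst \<gamma>)"
    using face_on_subset_down_closure[OF assms(1)] finite_down_closure[OF assms(2)] by (rule finite_subset)
  then show "finite (snd \<gamma>)"
    using face_on_edges_subset[OF assms(1)] by (meson finite_SigmaI finite_subset)
qed

lemma finite_faces_on:
  assumes "finite T"
  shows "finite {\<gamma>. face_on T \<gamma>}"
proof (rule finite_subset)
  show "{\<gamma>. face_on T \<gamma>} \<subseteq> Pow (down_closure T) \<times> Pow (down_closure T \<times> down_closure T)"
  proof
    fix \<gamma> assume "\<gamma> \<in> {\<gamma>. face_on T \<gamma>}"
    then have "fst \<gamma> \<subseteq> down_closure T" "snd \<gamma> \<subseteq> fst \<gamma> \<times> fst \<gamma>"
      using face_on_subset_down_closure face_on_edges_subset by auto
    then show "\<gamma> \<in> Pow (down_closure T) \<times> Pow (down_closure T \<times> down_closure T)" by (cases \<gamma>) auto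
  qed
  show "finite (Pow (down_closure T) \<times> Pow (down_closure T \<times> down_closure T))"
    using finite_down_closure[OF assms] by simp
qed

lemma face_on_level:
  assumes "face_on T \<gamma>" "\<forall>t \<in> T. level t = m" "v \<in> fst \<gamma>"
  shows "level v \<le> m" "level v = m \<Longrightarrow> v \<in> T"
proof -
  obtain S where S: "\<forall>ps \<in> S. lattice_path ps \<and> last ps \<in> T"
    "fst \<gamma> = (\<Union>ps \<in> S. set ps)"
    using assms(1) by (rule face_onE)
  then obtain ps where ps: "ps \<in> S" "v \<in> set ps" using assms(3) by auto
  have lp: "lattice_path ps" "last ps \<in> T" using S(1) ps(1) by auto
  then have "level (last ps) = m" using assms(2) by auto
  then show "level v \<le> m" "level v = m \<Longrightarrow> v \<in> T"
    using lattice_path_level_le[OF lp(1) ps(2)] lattice_path_level_eq_last[OF lp(1) ps(2)] lp(2)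
    by auto
qed

lemma face_on_reaches:
  assumes "face_on T \<gamma>" "v \<in> fst \<gamma>"
  shows "((0, 0), v) \<in> (snd \<gamma>)\<^sup>*"
proof -
  obtain S where S: "\<forall>ps \<in> S. lattice_path ps \<and> last ps \<in> T"
    "fst \<gamma> = (\<Union>ps \<in> S. set ps)" "snd \<gamma> = (\<Union>ps \<in> S. path_edges ps)"
    using assms(1) by (rule face_onE)
  then obtain ps where ps: "ps \<in> S" "v \<in> set ps" using assms(2) by auto
  then have "((0, 0), v) \<in> (path_edges ps)\<^sup>*" using lattice_path_reaches S(1) by blast
  moreover have "path_edges ps \<subseteq> snd \<gamma>" using ps S(3) by auto
  ultimately show ?thesis using rtrancl_mono by blast
qed

lemma face_on_has_pred:
  assumes "face_on T \<gamma>" "v \<in> fst \<gamma>" "v \<noteq> (0, 0)"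
  shows "v \<in> snd ` snd \<gamma>"
proof -
  obtain S where S: "\<forall>ps \<in> S. lattice_path ps \<and> last ps \<in> T"
    "fst \<gamma> = (\<Union>ps \<in> S. set ps)" "snd \<gamma> = (\<Union>ps \<in> S. path_edges ps)"
    using assms(1) by (rule face_onE)
  then obtain ps where ps: "ps \<in> S" "v \<in> set ps" using assms(2) by auto
  then have "v \<in> snd ` path_edges ps" using lattice_path_has_pred S(1) assms(3) by blast
  then show ?thesis using ps S(3) by auto
qed

text \<open>A face is connected, since every vertex is reached from the origin, and every vertex
  but the origin is the head of an edge; so its first Betti number is \<open>#E + 1 - #V\<close>.\<close>

lemma face_on_connected:
  assumes "face_on T \<gamma>" "fst \<gamma> \<noteq> {}"
  shows "fst \<gamma> // comp_rel \<gamma> = {fst \<gamma>}"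
proof -
  let ?E = "snd \<gamma> \<union> (snd \<gamma>)\<inverse>"
  have to_origin: "(x, (0, 0)) \<in> ?E\<^sup>*" and from_origin: "((0, 0), x) \<in> ?E\<^sup>*"
    if "x \<in> fst \<gamma>" for x
  proof -
    have "((0, 0), x) \<in> (snd \<gamma>)\<^sup>*" using face_on_reaches[OF assms(1) that] .
    then show "((0, 0), x) \<in> ?E\<^sup>*" and "(x, (0, 0)) \<in> ?E\<^sup>*"
      using rtrancl_mono[of "snd \<gamma>" ?E] rtrancl_mono[of "(snd \<gamma>)\<inverse>" ?E]
      by (auto dest: rtrancl_converseI)
  qed
  have "comp_rel \<gamma> `` {x} = fst \<gamma>" if "x \<in> fst \<gamma>" for x
  proof -
    have "(x, y) \<in> ?E\<^sup>*" if "y \<in> fst \<gamma>" for y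
      using rtrancl_trans[OF to_origin[OF \<open>x \<in> fst \<gamma>\<close>] from_origin[OF that]] .
    then show ?thesis using that by (auto simp: comp_rel_def)
  qed
  then show ?thesis using assms(2) by (auto simp: quotient_def)
qed

lemma card_face_on_vertices:
  assumes "face_on T \<gamma>" "finite T"
  shows "card (fst \<gamma>) \<le> Suc (card (snd \<gamma>))"
proof -
  have fin: "finite (fst \<gamma>)" "finite (snd \<gamma>)" using finite_face_on[OF assms] by auto
  have "card (fst \<gamma>) \<le> Suc (card (fst \<gamma> - {(0, 0)}))"
    using fin(1) by (cases "(0, 0) \<in> fst \<gamma>") (simp_all add: card_Diff_singleton)
  also have "card (fst \<gamma> - {(0, 0)}) \<le> card (snd ` snd \<gamma>)"
    using face_on_has_pred[OF assms(1)] fin by (intro card_mono) auto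
  also have "\<dots> \<le> card (snd \<gamma>)" using fin(2) by (rule card_image_le)
  finally show ?thesis by simp
qed

lemma face_dim_face_on:
  assumes "face_on T \<gamma>" "finite T" "T \<noteq> {}"
  shows "face_dim \<gamma> = Suc (card (snd \<gamma>)) - card (fst \<gamma>)"
proof -
  have "T \<subseteq> fst \<gamma>" using assms(1) by (rule face_onE)
  then have "fst \<gamma> \<noteq> {}" using assms(3) by blast
  then have "card (fst \<gamma> // comp_rel \<gamma>) = 1" using face_on_connected[OF assms(1)] by simp
  then show ?thesis by (simp add: face_dim_def)
qed

subsection \<open>Peeling off the top level\<close>

definition in_edges :: "vert set \<Rightarrow> (vert \<times> vert) set" where
  "in_edges T = {(u, v). v \<in> T \<and> Qplus_edge u v}"

definition covering_in_edges :: "vert set \<Rightarrow> (vert \<times> vert) set set" where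
  "covering_in_edges T = {E. E \<subseteq> in_edges T \<and> T \<subseteq> snd ` E}"

definition top_edges :: "nat \<Rightarrow> vert set \<times> (vert \<times> vert) set \<Rightarrow> (vert \<times> vert) set" where
  "top_edges m \<gamma> = {e \<in> snd \<gamma>. level (snd e) = m}"

definition lower_part :: "nat \<Rightarrow> vert set \<times> (vert \<times> vert) set \<Rightarrow> vert set \<times> (vert \<times> vert) set" where
  "lower_part m \<gamma> = ({v \<in> fst \<gamma>. level v < m}, {e \<in> snd \<gamma>. level (snd e) < m})"

definition attach_edges :: "(vert \<times> vert) set \<Rightarrow> vert set \<times> (vert \<times> vert) set
    \<Rightarrow> vert set \<times> (vert \<times> vert) set" where
  "attach_edges E \<gamma> = (fst \<gamma> \<union> snd ` E, snd \<gamma> \<union> E)"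

lemma finite_in_edges:
  assumes "finite T"
  shows "finite (in_edges T)"
proof (rule finite_subset)
  show "in_edges T \<subseteq> down_closure T \<times> T"
    using Qplus_edge_mono down_closureI[of _ _ T] by (fastforce simp: in_edges_def)
  show "finite (down_closure T \<times> T)" using finite_down_closure[OF assms] assms by simp
qed

lemma finite_covering_in_edges: "finite T \<Longrightarrow> finite (covering_in_edges T)"
  by (rule finite_subset[of _ "Pow (in_edges T)"]) (auto simp: covering_in_edges_def finite_in_edges)

lemma covering_in_edges_snd: "E \<in> covering_in_edges T \<Longrightarrow> snd ` E = T"
  by (auto simp: covering_in_edges_def in_edges_def)

lemma lattice_path_butlast_lower_part:
  assumes "lattice_path ps" "level (last ps) = m" "0 < m"
  shows "set (butlast ps) = {v \<in> set ps. level v < m}"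
    "path_edges (butlast ps) = {e \<in> path_edges ps. level (snd e) < m}"
proof -
  note split = lattice_path_butlast[OF assms]
  then show "set (butlast ps) = {v \<in> set ps. level v < m}" using assms(2) by auto
  have "snd e \<in> set (butlast ps)" if "e \<in> path_edges (butlast ps)" for e
    using that path_edges_subset by fastforce
  then show "path_edges (butlast ps) = {e \<in> path_edges ps. level (snd e) < m}"
    using split(3,4) assms(2) by auto
qed

definition snoc_paths :: "vert list set \<Rightarrow> (vert \<times> vert) set \<Rightarrow> vert list set" where
  "snoc_paths S E = {ps @ [v] | ps v. ps \<in> S \<and> (last ps, v) \<in> E}"

lemma snoc_pathsI: "ps \<in> S \<Longrightarrow> (last ps, v) \<in> E \<Longrightarrow> ps @ [v] \<in> snoc_paths S E"
  unfolding snoc_paths_def by blast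

lemma snoc_pathsE:
  assumes "qs \<in> snoc_paths S E"
  obtains ps v where "qs = ps @ [v]" "ps \<in> S" "(last ps, v) \<in> E"
  using assms unfolding snoc_paths_def by blast

lemma UN_set_snoc_paths:
  assumes "\<forall>ps \<in> S. \<exists>v. (last ps, v) \<in> E" and "\<forall>e \<in> E. \<exists>ps \<in> S. last ps = fst e"
  shows "(\<Union>qs \<in> snoc_paths S E. set qs) = (\<Union>ps \<in> S. set ps) \<union> snd ` E"
proof (intro equalityI subsetI)
  fix w assume "w \<in> (\<Union>ps \<in> S. set ps) \<union> snd ` E"
  then consider ps where "ps \<in> S" "w \<in> set ps" | e where "e \<in> E" "w = snd e" by blast
  then show "w \<in> (\<Union>qs \<in> snoc_paths S E. set qs)"
  proof cases
    case 1
    with assms(1) obtain v where "ps @ [v] \<in> snoc_paths S E" by (blast intro: snoc_pathsI)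
    then show ?thesis using 1(2) by (intro UN_I[of "ps @ [v]"]) simp_all
  next
    case 2
    with assms(2) obtain ps where "ps \<in> S" "last ps = fst e" by blast
    then have "ps @ [w] \<in> snoc_paths S E" using 2 by (intro snoc_pathsI) simp_all
    then show ?thesis by (intro UN_I[of "ps @ [w]"]) simp_all
  qed
next
  fix w assume "w \<in> (\<Union>qs \<in> snoc_paths S E. set qs)"
  then obtain qs where "qs \<in> snoc_paths S E" "w \<in> set qs" by (rule UN_E)
  moreover from this(1) obtain ps v where "qs = ps @ [v]" "ps \<in> S" and e: "(last ps, v) \<in> E"
    by (rule snoc_pathsE)
  moreover have "v \<in> snd ` E" using rev_image_eqI[OF e, of v snd] by simp
  ultimately show "w \<in> (\<Union>ps \<in> S. set ps) \<union> snd ` E" by auto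
qed

lemma UN_path_edges_snoc_paths:
  assumes "\<forall>ps \<in> S. ps \<noteq> [] \<and> (\<exists>v. (last ps, v) \<in> E)" and "\<forall>e \<in> E. \<exists>ps \<in> S. last ps = fst e"
  shows "(\<Union>qs \<in> snoc_paths S E. path_edges qs) = (\<Union>ps \<in> S. path_edges ps) \<union> E"
proof (intro equalityI subsetI)
  fix e assume "e \<in> (\<Union>ps \<in> S. path_edges ps) \<union> E"
  then consider ps where "ps \<in> S" "e \<in> path_edges ps" | "e \<in> E" by blast
  then show "e \<in> (\<Union>qs \<in> snoc_paths S E. path_edges qs)"
  proof cases
    case 1
    with assms(1) obtain v where "ps @ [v] \<in> snoc_paths S E" by (blast intro: snoc_pathsI)
    then show ?thesis
      using 1 assms(1) by (intro UN_I[of "ps @ [v]"]) (simp_all add: path_edges_snoc)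
  next
    case 2
    with assms(2) obtain ps where ps: "ps \<in> S" "last ps = fst e" by blast
    then have "ps @ [snd e] \<in> snoc_paths S E" using 2 by (intro snoc_pathsI) simp_all
    then show ?thesis
      using ps assms(1) by (intro UN_I[of "ps @ [snd e]"]) (simp_all add: path_edges_snoc)
  qed
next
  fix e assume "e \<in> (\<Union>qs \<in> snoc_paths S E. path_edges qs)"
  then obtain qs where "qs \<in> snoc_paths S E" "e \<in> path_edges qs" by (rule UN_E)
  moreover from this(1) obtain ps v where "qs = ps @ [v]" "ps \<in> S" "(last ps, v) \<in> E"
    by (rule snoc_pathsE)
  ultimately show "e \<in> (\<Union>ps \<in> S. path_edges ps) \<union> E"
    using assms(1) by (auto simp: path_edges_snoc)
qed

context
  fixes T :: "vert set" and m :: nat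
  assumes on_level: "\<forall>t \<in> T. level t = m" and pos_level: "0 < m"
begin

lemma top_edges_covering:
  assumes "face_on T \<gamma>"
  shows "top_edges m \<gamma> \<in> covering_in_edges T"
proof -
  obtain S where S: "\<forall>ps \<in> S. lattice_path ps \<and> last ps \<in> T"
    "fst \<gamma> = (\<Union>ps \<in> S. set ps)" "snd \<gamma> = (\<Union>ps \<in> S. path_edges ps)" "T \<subseteq> fst \<gamma>"
    using assms by (rule face_onE)
  have "top_edges m \<gamma> \<subseteq> in_edges T"
    using face_on_edge[OF assms] face_on_level(2)[OF assms on_level]
    by (auto simp: top_edges_def in_edges_def)
  moreover have "t \<in> snd ` top_edges m \<gamma>" if t: "t \<in> T" for t
  proof -
    obtain ps where ps: "ps \<in> S" "t \<in> set ps" using S(2,4) t by auto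
    have lp: "lattice_path ps" "level (last ps) = m" using S(1) ps(1) on_level by auto
    have "t = last ps" using lattice_path_level_eq_last[OF lp(1) ps(2)] lp(2) t on_level by simp
    moreover have "(last (butlast ps), last ps) \<in> snd \<gamma>"
      using lattice_path_butlast(4)[OF lp pos_level] S(3) ps(1) by auto
    ultimately show ?thesis using lp(2) by (force simp: top_edges_def)
  qed
  ultimately show ?thesis by (auto simp: covering_in_edges_def)
qed

lemma face_lower_part:
  assumes "face_on T \<gamma>"
  shows "face_on (fst ` top_edges m \<gamma>) (lower_part m \<gamma>)"
proof -
  obtain S where S: "\<forall>ps \<in> S. lattice_path ps \<and> last ps \<in> T"
    "fst \<gamma> = (\<Union>ps \<in> S. set ps)" "snd \<gamma> = (\<Union>ps \<in> S. path_edges ps)"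
    using assms by (rule face_onE)
  have lp: "lattice_path ps" "level (last ps) = m" if "ps \<in> S" for ps
    using S(1) that on_level by auto
  show ?thesis
  proof (rule face_onI)
    show "\<forall>qs \<in> butlast ` S. lattice_path qs \<and> last qs \<in> fst ` top_edges m \<gamma>"
    proof
      fix qs assume "qs \<in> butlast ` S"
      then obtain ps where ps: "ps \<in> S" "qs = butlast ps" by blast
      have "(last qs, last ps) \<in> top_edges m \<gamma>"
        using lattice_path_butlast(4)[OF lp[OF ps(1)] pos_level] S(3) ps lp(2)[OF ps(1)]
        by (auto simp: top_edges_def)
      then show "lattice_path qs \<and> last qs \<in> fst ` top_edges m \<gamma>"
        using lattice_path_butlast(1)[OF lp[OF ps(1)] pos_level] ps(2) by force
    qed
    have "set (butlast ps) = {v \<in> set ps. level v < m}"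
      "path_edges (butlast ps) = {e \<in> path_edges ps. level (snd e) < m}" if "ps \<in> S" for ps
      using lattice_path_butlast_lower_part[OF lp[OF that] pos_level] by auto
    then show "fst (lower_part m \<gamma>) = (\<Union>ps \<in> butlast ` S. set ps)"
      "snd (lower_part m \<gamma>) = (\<Union>ps \<in> butlast ` S. path_edges ps)"
      using S(2,3) by (auto simp: lower_part_def)
    show "fst ` top_edges m \<gamma> \<subseteq> fst (lower_part m \<gamma>)"
    proof
      fix u assume "u \<in> fst ` top_edges m \<gamma>"
      then obtain v where uv: "(u, v) \<in> snd \<gamma>" "level v = m" by (auto simp: top_edges_def)
      then have "level u < m" using Qplus_edge_level[OF face_on_edge(3)[OF assms uv(1)]] by simp
      then show "u \<in> fst (lower_part m \<gamma>)"
        using face_on_edge(1)[OF assms uv(1)] by (simp add: lower_part_def)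
    qed
  qed
qed

lemma attach_top_edges:
  assumes "face_on T \<gamma>"
  shows "attach_edges (top_edges m \<gamma>) (lower_part m \<gamma>) = \<gamma>"
proof -
  have "snd ` top_edges m \<gamma> = T" using covering_in_edges_snd top_edges_covering[OF assms] .
  moreover have "T \<subseteq> fst \<gamma>" using assms by (rule face_onE)
  moreover have "v \<in> T" if "v \<in> fst \<gamma>" "\<not> level v < m" for v
    using face_on_level[OF assms on_level that(1)] that(2) by simp
  ultimately have "fst \<gamma> = {v \<in> fst \<gamma>. level v < m} \<union> snd ` top_edges m \<gamma>" by auto
  moreover have "level (snd e) \<le> m" if "e \<in> snd \<gamma>" for e
    using face_on_edge(2)[OF assms, of "fst e" "snd e"] that face_on_level(1)[OF assms on_level]
    by simp
  then have "snd \<gamma> = {e \<in> snd \<gamma>. level (snd e) < m} \<union> top_edges m \<gamma>"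
    by (force simp: top_edges_def)
  ultimately show ?thesis
    unfolding attach_edges_def lower_part_def by (simp add: prod_eq_iff)
qed

lemma covering_in_edgesD:
  assumes "E \<in> covering_in_edges T" "(u, v) \<in> E"
  shows "v \<in> T" "Qplus_edge u v" "level u = m - 1"
proof -
  show "v \<in> T" "Qplus_edge u v" using assms by (auto simp: covering_in_edges_def in_edges_def)
  then show "level u = m - 1" using Qplus_edge_level on_level by fastforce
qed

lemma face_attach:
  assumes E: "E \<in> covering_in_edges T" and F: "face_on (fst ` E) \<gamma>"
  shows "face_on T (attach_edges E \<gamma>)"
proof -
  obtain S where S: "\<forall>ps \<in> S. lattice_path ps \<and> last ps \<in> fst ` E"
    "fst \<gamma> = (\<Union>ps \<in> S. set ps)" "snd \<gamma> = (\<Union>ps \<in> S. path_edges ps)" "fst ` E \<subseteq> fst \<gamma>"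
    using F by (rule face_onE)
  have continues: "ps \<noteq> [] \<and> (\<exists>v. (last ps, v) \<in> E)" if "ps \<in> S" for ps
  proof -
    have "last ps \<in> fst ` E" using S(1) that by simp
    then obtain e where "last ps = fst e" "e \<in> E" by (rule imageE)
    then have "(last ps, snd e) \<in> E" by simp
    moreover have "ps \<noteq> []" using S(1) that by (simp add: lattice_path_def)
    ultimately show ?thesis by blast
  qed
  have ends_at: "\<exists>ps \<in> S. last ps = fst e" if "e \<in> E" for e
  proof -
    have "fst e \<in> fst \<gamma>" using S(4) imageI[OF that, of fst] by (rule subsetD)
    then obtain ps where ps: "ps \<in> S" "fst e \<in> set ps" unfolding S(2) by blast
    obtain w where "(last ps, w) \<in> E" using continues[OF ps(1)] by blast
    then have "level (fst e) = level (last ps)"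
      using covering_in_edgesD(3)[OF E] covering_in_edgesD(3)[OF E, of "fst e" "snd e"] that by simp
    then have "fst e = last ps" using lattice_path_level_eq_last[OF _ ps(2)] S(1) ps(1) by simp
    then show ?thesis using ps(1) by (intro bexI[of _ ps]) simp_all
  qed
  show ?thesis
  proof (rule face_onI)
    show "\<forall>qs \<in> snoc_paths S E. lattice_path qs \<and> last qs \<in> T"
    proof
      fix qs assume "qs \<in> snoc_paths S E"
      then obtain ps v where qs: "qs = ps @ [v]" "ps \<in> S" "(last ps, v) \<in> E" by (rule snoc_pathsE)
      then show "lattice_path qs \<and> last qs \<in> T"
        using S(1) covering_in_edgesD(1,2)[OF E qs(3)] lattice_path_snoc by auto
    qed
    show "fst (attach_edges E \<gamma>) = (\<Union>qs \<in> snoc_paths S E. set qs)"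
      using UN_set_snoc_paths continues ends_at S(2) by (simp add: attach_edges_def)
    show "snd (attach_edges E \<gamma>) = (\<Union>qs \<in> snoc_paths S E. path_edges qs)"
      using UN_path_edges_snoc_paths continues ends_at S(3) by (simp add: attach_edges_def)
    show "T \<subseteq> fst (attach_edges E \<gamma>)"
      using E by (auto simp: covering_in_edges_def attach_edges_def)
  qed
qed

lemma attach_edges_split:
  assumes E: "E \<in> covering_in_edges T" and F: "face_on (fst ` E) \<gamma>"
  shows "top_edges m (attach_edges E \<gamma>) = E" "lower_part m (attach_edges E \<gamma>) = \<gamma>"
proof -
  have "\<forall>u \<in> fst ` E. level u = m - 1" using covering_in_edgesD(3)[OF E] by force
  then have lower: "level v < m" if "v \<in> fst \<gamma>" for v
    using face_on_level(1)[OF F _ that] pos_level by fastforce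
  have lower_edges: "level (snd e) < m" if "e \<in> snd \<gamma>" for e
    using lower face_on_edge(2)[OF F, of "fst e" "snd e"] that by simp
  have top: "level (snd e) = m" if "e \<in> E" for e
    using covering_in_edgesD(1)[OF E, of "fst e" "snd e"] on_level that by simp
  show "top_edges m (attach_edges E \<gamma>) = E"
    using lower_edges top by (force simp: top_edges_def attach_edges_def)
  show "lower_part m (attach_edges E \<gamma>) = \<gamma>"
    using lower lower_edges top by (force simp: lower_part_def attach_edges_def prod_eq_iff)
qed

text \<open>Every edge beyond the first one into a terminal vertex closes one more cycle.\<close>

lemma face_dim_attach:
  assumes "finite T" "T \<noteq> {}" and E: "E \<in> covering_in_edges T" and F: "face_on (fst ` E) \<gamma>"
  shows "face_dim (attach_edges E \<gamma>) = face_dim \<gamma> + (card E - card T)"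
proof -
  have finE: "finite E"
    using E finite_in_edges[OF assms(1)] by (auto simp: covering_in_edges_def intro: finite_subset)
  have sndE: "snd ` E = T" using covering_in_edges_snd[OF E] .
  have fin: "finite (fst \<gamma>)" "finite (snd \<gamma>)" using finite_face_on[OF F] finE by auto
  have split: "top_edges m (attach_edges E \<gamma>) = E" "lower_part m (attach_edges E \<gamma>) = \<gamma>"
    using attach_edges_split[OF E F] by auto
  have "card (snd (attach_edges E \<gamma>)) = card (snd \<gamma>) + card E"
  proof -
    have "snd \<gamma> \<inter> E = {}"
      using split by (force simp: top_edges_def lower_part_def attach_edges_def prod_eq_iff)
    then show ?thesis using fin finE by (simp add: attach_edges_def card_Un_disjoint)
  qed
  moreover have "card (fst (attach_edges E \<gamma>)) = card (fst \<gamma>) + card T"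
  proof -
    have "fst \<gamma> \<inter> T = {}"
      using split on_level by (force simp: lower_part_def attach_edges_def prod_eq_iff)
    then show ?thesis using fin assms(1) sndE by (simp add: attach_edges_def card_Un_disjoint)
  qed
  moreover have "card T \<le> card E" using card_image_le[OF finE, of snd] sndE by simp
  moreover have "card (fst \<gamma>) \<le> Suc (card (snd \<gamma>))" using card_face_on_vertices[OF F] finE by simp
  moreover have "fst ` E \<noteq> {}" using sndE assms(2) by auto
  ultimately show ?thesis
    using face_dim_face_on[OF face_attach[OF E F] assms(1,2)] face_dim_face_on[OF F] finE by simp
qed

theorem face_poly_top_level:
  assumes "finite T" "T \<noteq> {}"
  shows "face_poly T = (\<Sum>E \<in> covering_in_edges T. monom 1 (card E - card T) * face_poly (fst ` E))"
proof -
  let ?A = "SIGMA E : covering_in_edges T. {\<gamma>. face_on (fst ` E) \<gamma>}"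
  have bij: "bij_betw (\<lambda>(E, \<gamma>). attach_edges E \<gamma>) ?A {\<gamma>. face_on T \<gamma>}"
    by (rule bij_betw_byWitness[where f' = "\<lambda>\<gamma>. (top_edges m \<gamma>, lower_part m \<gamma>)"])
      (auto simp: attach_edges_split face_attach attach_top_edges top_edges_covering face_lower_part)
  have finite_faces: "finite {\<gamma>. face_on (fst ` E) \<gamma>}" if "E \<in> covering_in_edges T" for E
    using that finite_in_edges[OF assms(1)]
    by (intro finite_faces_on) (auto simp: covering_in_edges_def intro: finite_subset)
  have "face_poly T = (\<Sum>p \<in> ?A. monom 1 (face_dim ((\<lambda>(E, \<gamma>). attach_edges E \<gamma>) p)))"
    unfolding face_poly_def by (rule sum.reindex_bij_betw[OF bij, symmetric])
  also have "\<dots> = (\<Sum>(E, \<gamma>) \<in> ?A. monom 1 (card E - card T) * monom 1 (face_dim \<gamma>))"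
    by (rule sum.cong) (auto simp: face_dim_attach[OF assms] mult_monom add.commute)
  also have "\<dots> = (\<Sum>E \<in> covering_in_edges T. monom 1 (card E - card T) * face_poly (fst ` E))"
    by (simp add: sum.Sigma[symmetric] finite_covering_in_edges[OF assms(1)] finite_faces
        face_poly_def sum_distrib_left)
  finally show ?thesis .
qed

end

subsection \<open>Coefficients of the differential operators\<close>

definition fact_scaled :: "(nat list \<Rightarrow> rat poly) \<Rightarrow> mser" where
  "fact_scaled g k = smult (inverse (of_nat (prod_list (map fact k)))) (g k)"

definition eq_on_length :: "nat \<Rightarrow> mser \<Rightarrow> mser \<Rightarrow> bool" where
  "eq_on_length M f g \<longleftrightarrow> (\<forall>k. length k = M \<longrightarrow> f k = g k)"

definition bump :: "nat \<Rightarrow> nat list \<Rightarrow> nat list" where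
  "bump p k = k[p := Suc (k ! p)]"

definition offset :: "(nat \<Rightarrow> nat) \<Rightarrow> nat list \<Rightarrow> nat list" where
  "offset v K = map (\<lambda>q. K ! q + v q) [0..<length K]"

lemma length_bump [simp]: "length (bump p k) = length k"
  by (simp add: bump_def)

lemma length_offset [simp]: "length (offset v K) = length K"
  by (simp add: offset_def)

lemma offset_zero: "offset (\<lambda>_. 0) K = K"
  by (rule nth_equalityI) (auto simp: offset_def)

lemma offset_bump:
  "p < length K \<Longrightarrow> offset v (bump p K) = offset (\<lambda>q. v q + (if q = p then 1 else 0)) K"
  by (rule nth_equalityI) (auto simp: offset_def bump_def nth_list_update)

lemma prod_fact_bump:
  "p < length k \<Longrightarrow> prod_list (map fact (bump p k)) = Suc (k ! p) * (prod_list (map fact k) :: nat)"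
proof (induction k arbitrary: p)
  case (Cons x k)
  then show ?case by (cases p) (auto simp: bump_def algebra_simps)
qed simp

lemma Psi_fact_scaled: "eq_on_length M (Psi M) (fact_scaled (\<lambda>k. map_poly of_int (fpoly k)))"
  by (simp add: eq_on_length_def Psi_def fact_scaled_def)

lemma eq_on_length_fact_scaled_cong:
  "eq_on_length M f (fact_scaled g) \<Longrightarrow> (\<And>K. length K = M \<Longrightarrow> g K = h K)
    \<Longrightarrow> eq_on_length M f (fact_scaled h)"
  by (simp add: eq_on_length_def fact_scaled_def)

text \<open>Differentiating \<open>x\<^sup>k/k!\<close> gives \<open>x\<^sup>k\<^sup>-\<^sup>1/(k-1)!\<close>: on coefficients of \<open>fact_scaled g\<close>,
  the derivative only shifts the argument of \<open>g\<close>.\<close>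

lemma pd_fact_scaled:
  assumes "eq_on_length M f (fact_scaled g)" "p < M"
  shows "eq_on_length M (pd p f) (fact_scaled (\<lambda>k. g (bump p k)))"
  unfolding eq_on_length_def
proof (intro allI impI)
  fix k :: "nat list" assume k: "length k = M"
  define a where "a = Suc (k ! p)"
  have "(of_nat a :: rat) \<noteq> 0" by (simp add: a_def)
  then have "(of_nat a :: rat) * inverse (of_nat (a * prod_list (map fact k)))
      = inverse (of_nat (prod_list (map fact k)))"
    by (simp add: inverse_mult_distrib mult.assoc[symmetric])
  moreover have "f (bump p k) = fact_scaled g (bump p k)" using assms(1) k by (simp add: eq_on_length_def)
  ultimately show "pd p f k = fact_scaled (\<lambda>k. g (bump p k)) k"
    using prod_fact_bump[of p k] assms(2) k
    by (simp add: pd_def fact_scaled_def a_def bump_def[symmetric])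
qed

lemma fold_pd_even_fact_scaled:
  assumes "eq_on_length M f (fact_scaled g)" "2 * n \<le> Suc M"
  shows "eq_on_length M (fold (\<lambda>i g. pd (2 * i) g) [0..<n] f)
    (fact_scaled (\<lambda>K. g (offset (\<lambda>q. if even q \<and> q < 2 * n then 1 else 0) K)))"
  using assms(2)
proof (induction n)
  case 0
  then show ?case using assms(1) by (simp add: offset_zero)
next
  case (Suc n)
  have "offset (\<lambda>q. if even q \<and> q < 2 * n then 1 else 0) (bump (2 * n) K)
      = offset (\<lambda>q. if even q \<and> q < 2 * Suc n then 1 else 0) K" if "length K = M" for K
    using Suc.prems that
    by (auto simp: offset_bump fun_eq_iff less_Suc_eq intro!: arg_cong[of _ _ "\<lambda>v. offset v K"])
  moreover have "eq_on_length M (pd (2 * n) (fold (\<lambda>i g. pd (2 * i) g) [0..<n] f))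
    (fact_scaled (\<lambda>K. g (offset (\<lambda>q. if even q \<and> q < 2 * n then 1 else 0) (bump (2 * n) K))))"
    using Suc by (intro pd_fact_scaled) auto
  ultimately show ?case by (auto elim: eq_on_length_fact_scaled_cong)
qed

definition ternary_words :: "nat \<Rightarrow> nat list set" where
  "ternary_words n = {c. set c \<subseteq> {0, 1, 2} \<and> length c = n}"

text \<open>Expanding the product of the factors \<open>\<partial>x\<^sub>j\<^sub>+\<^sub>1 + \<partial>x\<^sub>j\<^sub>+\<^sub>2 + t \<partial>y\<^sub>j\<^sub>+\<^sub>1\<close>, a word \<open>c\<close>
  records the summand chosen in factor \<open>j\<close>: letter 0, 1, 2 differentiates at position
  \<open>2j\<close>, \<open>2j + 2\<close>, \<open>2j + 1\<close> of \<open>x * y\<close>, and each letter 2 contributes a factor \<open>t\<close>.\<close>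

definition letter_pos :: "nat \<Rightarrow> nat \<Rightarrow> nat" where
  "letter_pos j d = (if d = 0 then 2 * j else if d = 1 then 2 * j + 2 else 2 * j + 1)"

definition word_degree :: "nat list \<Rightarrow> nat \<Rightarrow> nat" where
  "word_degree c q = card {j. j < length c \<and> letter_pos j (c ! j) = q}"

definition count_y :: "nat list \<Rightarrow> nat" where
  "count_y c = length (filter (\<lambda>d. d = 2) c)"

lemma ternary_words_0: "ternary_words 0 = {[]}"
  by (auto simp: ternary_words_def)

lemma ternary_words_Suc:
  "ternary_words (Suc n) = (\<lambda>(c, d). c @ [d]) ` (ternary_words n \<times> {0, 1, 2})"
proof (intro set_eqI iffI)
  fix c' assume "c' \<in> ternary_words (Suc n)"
  then have set: "set c' \<subseteq> {0, 1, 2}" and len: "length c' = Suc n"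
    by (auto simp: ternary_words_def)
  then have ne: "c' \<noteq> []" by auto
  have "(butlast c', last c') \<in> ternary_words n \<times> {0, 1, 2}"
    using set len last_in_set[OF ne] by (auto simp: ternary_words_def dest: in_set_butlastD)
  moreover have "c' = butlast c' @ [last c']" using ne by simp
  ultimately show "c' \<in> (\<lambda>(c, d). c @ [d]) ` (ternary_words n \<times> {0, 1, 2})"
    by (auto intro: rev_image_eqI)
qed (auto simp: ternary_words_def)

lemma sum_ternary_words_Suc:
  "(\<Sum>c \<in> ternary_words (Suc n). F c) = (\<Sum>c \<in> ternary_words n. \<Sum>d \<in> {0, 1, 2}. F (c @ [d]))"
proof -
  have inj: "inj_on (\<lambda>(c, d). c @ [d]) (ternary_words n \<times> {0, 1, 2})"
    by (auto simp: inj_on_def)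
  have "(\<Sum>c \<in> ternary_words (Suc n). F c) = (\<Sum>(c, d) \<in> ternary_words n \<times> {0, 1, 2}. F (c @ [d]))"
    unfolding ternary_words_Suc sum.reindex[OF inj] by (simp add: comp_def case_prod_beta)
  also have "\<dots> = (\<Sum>c \<in> ternary_words n. \<Sum>d \<in> {0, 1, 2}. F (c @ [d]))"
    by (rule sum.cartesian_product[symmetric])
  finally show ?thesis .
qed

lemma ternary_words_length: "c \<in> ternary_words n \<Longrightarrow> length c = n"
  by (simp add: ternary_words_def)

lemma ternary_words_nth: "c \<in> ternary_words n \<Longrightarrow> j < n \<Longrightarrow> c ! j \<in> {0, 1, 2}"
  by (auto simp: ternary_words_def dest!: nth_mem)

lemma word_degree_Nil: "word_degree [] = (\<lambda>_. 0)"
  by (simp add: word_degree_def fun_eq_iff)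

lemma word_degree_snoc:
  "word_degree (c @ [d]) q = word_degree c q + (if q = letter_pos (length c) d then 1 else 0)"
proof -
  have "{j. j < length (c @ [d]) \<and> letter_pos j ((c @ [d]) ! j) = q}
      = {j. j < length c \<and> letter_pos j (c ! j) = q} \<union> (if q = letter_pos (length c) d then {length c} else {})"
    by (auto simp: nth_append less_Suc_eq)
  then show ?thesis by (simp add: word_degree_def card_insert_if)
qed

lemma count_y_snoc: "count_y (c @ [d]) = count_y c + count_y [d]"
  by (simp add: count_y_def)

lemma factor_op_fact_scaled:
  assumes "eq_on_length M f (fact_scaled g)" "2 * j + 2 < M"
  shows "eq_on_length M (factor_op j f)
    (fact_scaled (\<lambda>K. \<Sum>d \<in> {0, 1, 2}. [:0, 1:] ^ count_y [d] * g (bump (letter_pos j d) K)))"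
  unfolding eq_on_length_def
proof (intro allI impI)
  fix K :: "nat list" assume K: "length K = M"
  have "pd p f K = fact_scaled (\<lambda>K. g (bump p K)) K" if "p \<le> 2 * j + 2" for p
    using pd_fact_scaled[OF assms(1), of p] that assms(2) K by (simp add: eq_on_length_def)
  then show "factor_op j f K
      = fact_scaled (\<lambda>K. \<Sum>d \<in> {0, 1, 2}. [:0, 1:] ^ count_y [d] * g (bump (letter_pos j d) K)) K"
    by (simp add: factor_op_def fact_scaled_def letter_pos_def count_y_def
        smult_add_right mult_smult_right algebra_simps)
qed

lemma fold_factor_op_fact_scaled:
  assumes "eq_on_length M f (fact_scaled g)" "2 * n < M"
  shows "eq_on_length M (fold factor_op [0..<n] f) (fact_scaled
    (\<lambda>K. \<Sum>c \<in> ternary_words n. [:0, 1:] ^ count_y c * g (offset (word_degree c) K)))"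
  using assms(2)
proof (induction n)
  case 0
  then show ?case using assms(1) by (simp add: ternary_words_0 word_degree_Nil offset_zero count_y_def)
next
  case (Suc n)
  let ?h = "\<lambda>K. \<Sum>c \<in> ternary_words n. [:0, 1:] ^ count_y c * g (offset (word_degree c) K)"
  have "(\<Sum>d \<in> {0, 1, 2}. [:0, 1:] ^ count_y [d] * ?h (bump (letter_pos n d) K))
      = (\<Sum>c \<in> ternary_words (Suc n). [:0, 1:] ^ count_y c * g (offset (word_degree c) K))"
    if "length K = M" for K
  proof -
    have "offset (word_degree c) (bump (letter_pos n d) K) = offset (word_degree (c @ [d])) K"
      if "c \<in> ternary_words n" "d \<in> {0, 1, 2}" for c d
    proof -
      have "letter_pos n d < length K"
        using that(2) Suc.prems \<open>length K = M\<close> by (auto simp: letter_pos_def)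
      moreover have "word_degree (c @ [d]) = (\<lambda>q. word_degree c q + (if q = letter_pos n d then 1 else 0))"
        using ternary_words_length[OF that(1)] by (simp add: fun_eq_iff word_degree_snoc)
      ultimately show ?thesis by (simp add: offset_bump)
    qed
    then show ?thesis
      by (simp add: sum_ternary_words_Suc sum_distrib_left count_y_snoc power_add
          mult_ac sum.distrib)
  qed
  moreover have "eq_on_length M (factor_op n (fold factor_op [0..<n] f))
    (fact_scaled (\<lambda>K. \<Sum>d \<in> {0, 1, 2}. [:0, 1:] ^ count_y [d] * ?h (bump (letter_pos n d) K)))"
    using Suc by (intro factor_op_fact_scaled) auto
  ultimately show ?case by (auto elim: eq_on_length_fact_scaled_cong)
qed

lemma Dx_Psi:
  assumes "0 < s" "length K = 2 * s - 1"
  shows "Dx s (Psi (2 * s - 1)) K = fact_scaled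
    (\<lambda>K. map_poly of_int (fpoly (offset (\<lambda>q. if even q \<and> q < 2 * s then 1 else 0) K))) K"
  using fold_pd_even_fact_scaled[OF Psi_fact_scaled, of s "2 * s - 1"] assms
  by (simp add: Dx_def eq_on_length_def)

lemma Pop_Psi:
  assumes "0 < s" "length K = 2 * s - 1"
  shows "Pop s (Psi (2 * s - 1)) K = fact_scaled (\<lambda>K. \<Sum>c \<in> ternary_words (s - 1).
    [:0, 1:] ^ count_y c * map_poly of_int (fpoly (offset (word_degree c) K))) K"
  using fold_factor_op_fact_scaled[OF Psi_fact_scaled, of "s - 1" "2 * s - 1"] assms
  by (simp add: Pop_def eq_on_length_def)

subsection \<open>The ladder diagrams of \<open>x * y\<close>\<close>

definition partial_sums :: "nat list \<Rightarrow> nat set" where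
  "partial_sums L = (\<lambda>l. sum_list (take l L)) ` {..length L}"

lemma partial_sums_Cons: "partial_sums (x # L) = insert 0 ((+) x ` partial_sums L)"
  by (simp add: partial_sums_def atMost_Suc_eq_insert_0 image_image)

lemma partial_sums_filter_pos: "partial_sums (filter (\<lambda>x. 0 < x) L) = partial_sums L"
proof (induction L)
  case Nil
  then show ?case by simp
next
  case (Cons x L)
  have "0 \<in> partial_sums L" by (force simp: partial_sums_def)
  with Cons show ?case by (auto simp: partial_sums_Cons)
qed

lemma terminals_partial_sums: "terminals L = (\<lambda>p. (p, sum_list L - p)) ` partial_sums L"
proof -
  have "terminals L = (\<lambda>p. (p, sum_list (pos_part L) - p)) ` partial_sums (pos_part L)"
    unfolding terminals_def partial_sums_def Let_def by auto
  moreover have "sum_list (pos_part L) = sum_list L"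
    unfolding pos_part_def by (induction L) auto
  ultimately show ?thesis by (simp add: partial_sums_filter_pos pos_part_def)
qed

lemma sum_list_take_offset:
  "l \<le> length K \<Longrightarrow> sum_list (take l (offset v K)) = (\<Sum>q<l. K ! q) + (\<Sum>q<l. v q)"
  by (simp add: offset_def take_map sum_list_sum_nth sum.distrib atLeast0LessThan)

definition interleave :: "nat \<Rightarrow> nat list \<Rightarrow> nat list" where
  "interleave s k = map (\<lambda>q. if even q then k ! (q div 2) else 0) [0..<2 * s - 1]"

lemma length_interleave [simp]: "length (interleave s k) = 2 * s - 1"
  by (simp add: interleave_def)

lemma sum_interleave:
  assumes "l \<le> 2 * s - 1" "length k = s"
  shows "(\<Sum>q<l. interleave s k ! q) = sum_list (take ((l + 1) div 2) k)"
  using assms(1)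
proof (induction l)
  case (Suc l)
  show ?case
  proof (cases "even l")
    case True
    then have "l div 2 < length k" "(Suc l + 1) div 2 = Suc (l div 2)" "(l + 1) div 2 = l div 2"
      using Suc.prems assms(2) by auto
    then show ?thesis using Suc True by (simp add: interleave_def take_Suc_conv_app_nth)
  next
    case False
    then have "(Suc l + 1) div 2 = (l + 1) div 2" by presburger
    then show ?thesis using Suc False by (simp add: interleave_def)
  qed
qed simp

lemma sum_even_indicator: "(\<Sum>q<l. if even q then 1 else 0 :: nat) = (l + 1) div 2"
  by (induction l) auto

lemma sum_word_degree:
  "(\<Sum>q<l. word_degree c q) = card {j. j < length c \<and> letter_pos j (c ! j) < l}"
proof (induction l)
  case (Suc l)
  have "{j. j < length c \<and> letter_pos j (c ! j) < Suc l}
      = {j. j < length c \<and> letter_pos j (c ! j) < l} \<union> {j. j < length c \<and> letter_pos j (c ! j) = l}"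
    by auto
  moreover have "card \<dots> = card {j. j < length c \<and> letter_pos j (c ! j) < l}
      + card {j. j < length c \<and> letter_pos j (c ! j) = l}"
    by (rule card_Un_disjoint) auto
  ultimately show ?case using Suc by (simp add: word_degree_def)
qed simp

lemma card_letter_pos_less_odd:
  assumes "i \<le> length c"
  shows "card {j. j < length c \<and> letter_pos j (c ! j) < 2 * i + 1}
    = i + (if i < length c \<and> c ! i = 0 then 1 else 0)"
proof -
  have "{j. j < length c \<and> letter_pos j (c ! j) < 2 * i + 1}
      = {..<i} \<union> (if i < length c \<and> c ! i = 0 then {i} else {})" (is "?A = ?B")
  proof (intro set_eqI)
    fix x
    consider "x < i" | "x = i" | "i < x" by linarith
    then show "x \<in> ?A \<longleftrightarrow> x \<in> ?B" using assms by cases (auto simp: letter_pos_def)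
  qed
  then show ?thesis by auto
qed

lemma card_letter_pos_less_even:
  assumes "i < length c"
  shows "card {j. j < length c \<and> letter_pos j (c ! j) < 2 * i + 2}
    = i + (if c ! i \<noteq> 1 then 1 else 0)"
proof -
  have "{j. j < length c \<and> letter_pos j (c ! j) < 2 * i + 2}
      = {..<i} \<union> (if c ! i \<noteq> 1 then {i} else {})" (is "?A = ?B")
  proof (intro set_eqI)
    fix x
    consider "x < i" | "x = i" | "i < x" by linarith
    then show "x \<in> ?A \<longleftrightarrow> x \<in> ?B" using assms by cases (auto simp: letter_pos_def)
  qed
  then show ?thesis by auto
qed

lemma atMost_odd_even_split:
  fixes s :: nat
  shows "{..2 * s - 1} = insert 0 (\<Union>i < s. insert (2 * i + 1) (if i < s - 1 then {2 * i + 2} else {}))"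
proof (intro set_eqI iffI)
  fix l assume "l \<in> {..2 * s - 1}"
  then have l: "l \<le> 2 * s - 1" by simp
  consider "l = 0" | "odd l" | "even l" "0 < l" by auto
  then show "l \<in> insert 0 (\<Union>i < s. insert (2 * i + 1) (if i < s - 1 then {2 * i + 2} else {}))"
  proof cases
    case 2
    then have "l = 2 * (l div 2) + 1" "l div 2 < s" using l by presburger+
    then show ?thesis by blast
  next
    case 3
    then have "l = 2 * (l div 2 - 1) + 2" "l div 2 - 1 < s - 1" "l div 2 - 1 < s" using l by presburger+
    then show ?thesis by (simp only: UN_iff insert_iff) (metis empty_iff insert_iff lessThan_iff)
  qed simp
qed (auto split: if_splits)

text \<open>Below, \<open>interleave s k\<close> is the exponent vector of \<open>x * y\<close> at \<open>y = 0\<close>. Adding \<open>1\<close> at the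
  \<open>x\<close>-positions gives a diagram whose terminal vertices \<open>terminal i\<close> all lie on level
  \<open>top_level\<close>; \<open>lower_point x\<close> is the vertex on the level just below with first coordinate \<open>x\<close>.\<close>

context
  fixes s :: nat and k :: "nat list"
  assumes s_pos: "0 < s" and length_k: "length k = s"
begin

definition terminal_x :: "nat \<Rightarrow> nat" where
  "terminal_x i = sum_list (take i k) + i"

definition top_level :: nat where
  "top_level = terminal_x s"

definition terminal :: "nat \<Rightarrow> vert" where
  "terminal i = (terminal_x i, top_level - terminal_x i)"

definition lower_point :: "nat \<Rightarrow> vert" where
  "lower_point x = (x, top_level - 1 - x)"

lemma terminal_x_0 [simp]: "terminal_x 0 = 0"
  by (simp add: terminal_x_def)

lemma terminal_x_Suc: "i < s \<Longrightarrow> terminal_x (Suc i) = terminal_x i + k ! i + 1"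
  using take_Suc_conv_app_nth[of i k] length_k by (simp add: terminal_x_def)

lemma terminal_x_less: "i < j \<Longrightarrow> j \<le> s \<Longrightarrow> terminal_x i < terminal_x j"
proof (induction j)
  case (Suc j)
  then show ?case using terminal_x_Suc[of j] by (cases "i = j") auto
qed simp

lemma terminal_x_less_iff: "i \<le> s \<Longrightarrow> j \<le> s \<Longrightarrow> terminal_x i < terminal_x j \<longleftrightarrow> i < j"
  using terminal_x_less by (metis linorder_neqE_nat order_less_asym')

lemma terminal_x_le_top: "i \<le> s \<Longrightarrow> terminal_x i \<le> top_level"
  unfolding top_level_def using terminal_x_less[of i s] by (cases "i = s") auto

lemma terminal_x_pos: "0 < i \<Longrightarrow> i \<le> s \<Longrightarrow> 0 < terminal_x i"
  using terminal_x_less[of 0 i] by simp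

lemma terminal_x_inj: "i \<le> s \<Longrightarrow> j \<le> s \<Longrightarrow> terminal_x i = terminal_x j \<Longrightarrow> i = j"
  by (cases i j rule: linorder_cases) (auto simp: terminal_x_less_iff dest: terminal_x_less)

lemma inj_on_terminal: "inj_on terminal {..s}"
  by (rule inj_onI) (auto simp: terminal_def intro: terminal_x_inj)

lemma level_terminal: "i \<le> s \<Longrightarrow> level (terminal i) = top_level"
  using terminal_x_le_top by (simp add: terminal_def level_def)

lemma Qplus_edge_terminal:
  assumes "i \<le> s"
  shows "Qplus_edge u (terminal i)
    \<longleftrightarrow> (0 < i \<and> u = lower_point (terminal_x i - 1)) \<or> (i < s \<and> u = lower_point (terminal_x i))"
proof -
  have "0 < top_level - terminal_x i \<longleftrightarrow> i < s"
    using terminal_x_less_iff[OF assms order.refl] by (simp add: top_level_def)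
  moreover have "0 < terminal_x i \<longleftrightarrow> 0 < i" using terminal_x_pos assms by (cases i) auto
  ultimately show ?thesis
    using terminal_x_le_top[OF assms]
    by (auto simp: terminal_def lower_point_def Qplus_edge_into)
qed

lemma terminals_Dx:
  "terminals (offset (\<lambda>q. if even q \<and> q < 2 * s then 1 else 0) (interleave s k)) = terminal ` {..s}"
proof -
  let ?L = "offset (\<lambda>q. if even q \<and> q < 2 * s then 1 else 0) (interleave s k)"
  have sums: "sum_list (take l ?L) = terminal_x ((l + 1) div 2)" if "l \<le> 2 * s - 1" for l
  proof -
    have "(\<Sum>q<l. if even q \<and> q < 2 * s then 1 else 0 :: nat) = (\<Sum>q<l. if even q then 1 else 0)"
      using that by (intro sum.cong) auto
    then show ?thesis
      using that sum_list_take_offset[of l "interleave s k"] sum_interleave[OF that length_k]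
      by (simp add: sum_even_indicator terminal_x_def)
  qed
  have "(\<lambda>l. (l + 1) div 2) ` {..2 * s - 1} = {..s}"
  proof (intro set_eqI iffI)
    fix i assume "i \<in> {..s}"
    then show "i \<in> (\<lambda>l. (l + 1) div 2) ` {..2 * s - 1}"
      by (intro rev_image_eqI[of "if i = 0 then 0 else 2 * i - 1"]) auto
  qed auto
  then have "terminal_x ` {..s} = (\<lambda>l. terminal_x ((l + 1) div 2)) ` {..2 * s - 1}"
    by (metis image_image)
  also have "\<dots> = partial_sums ?L"
    unfolding partial_sums_def by (intro image_cong) (simp_all add: sums)
  finally have "partial_sums ?L = terminal_x ` {..s}" ..
  moreover have "sum_list ?L = top_level"
    using sums[of "2 * s - 1"] s_pos by (simp add: top_level_def)
  ultimately show ?thesis by (auto simp: terminals_partial_sums terminal_def)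
qed

text \<open>Terminal \<open>i\<close> is entered from below (from \<open>x = terminal_x i\<close>), from the left (from
  \<open>x = terminal_x i - 1\<close>), or from both. For \<open>0 < i < s\<close> the letter chosen in factor \<open>i - 1\<close>
  decides: \<open>\<partial>x\<^sub>i\<close> from below, \<open>\<partial>x\<^sub>i\<^sub>+\<^sub>1\<close> from the left, \<open>t \<partial>y\<^sub>i\<close> from both. The first
  terminal can only be entered from below, the last one only from the left.\<close>

definition letter :: "nat list \<Rightarrow> nat \<Rightarrow> nat" where
  "letter c i = (if i = 0 then 0 else if i = s then 1 else c ! (i - 1))"

definition sources :: "nat list \<Rightarrow> nat \<Rightarrow> nat set" where
  "sources c i = (if letter c i \<noteq> 0 then {terminal_x i - 1} else {})
    \<union> (if letter c i \<noteq> 1 then {terminal_x i} else {})"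

lemma sum_take_Pop:
  assumes c: "c \<in> ternary_words (s - 1)" and l: "l \<le> 2 * s - 1"
  shows "sum_list (take l (offset (word_degree c) (interleave s k)))
    = sum_list (take ((l + 1) div 2) k) + card {j. j < s - 1 \<and> letter_pos j (c ! j) < l}"
  using l sum_list_take_offset[of l "interleave s k"] sum_interleave[OF l length_k]
    sum_word_degree[of c l] ternary_words_length[OF c]
  by simp

lemma sum_take_Pop_odd:
  assumes c: "c \<in> ternary_words (s - 1)" and i: "i < s"
  shows "sum_list (take (2 * i + 1) (offset (word_degree c) (interleave s k)))
    = terminal_x (Suc i) - 1 + (if i < s - 1 \<and> c ! i = 0 then 1 else 0)"
  using sum_take_Pop[OF c, of "2 * i + 1"] card_letter_pos_less_odd[of i c] ternary_words_length[OF c] i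
  by (simp add: terminal_x_def)

lemma sum_take_Pop_even:
  assumes c: "c \<in> ternary_words (s - 1)" and i: "i < s - 1"
  shows "sum_list (take (2 * i + 2) (offset (word_degree c) (interleave s k)))
    = terminal_x (Suc i) - 1 + (if c ! i \<noteq> 1 then 1 else 0)"
  using sum_take_Pop[OF c, of "2 * i + 2"] card_letter_pos_less_even[of i c] ternary_words_length[OF c] i
  by (simp add: terminal_x_def)

lemma sources_Suc_partial_sums:
  assumes c: "c \<in> ternary_words (s - 1)" and i: "i < s"
  shows "sources c (Suc i) = (\<lambda>l. sum_list (take l (offset (word_degree c) (interleave s k))))
    ` insert (2 * i + 1) (if i < s - 1 then {2 * i + 2} else {})"
proof -
  have "0 < terminal_x (Suc i)" using terminal_x_pos i by simp
  moreover have "i < s - 1 \<Longrightarrow> c ! i \<in> {0, 1, 2}" using ternary_words_nth[OF c] by simp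
  ultimately show ?thesis
    using sum_take_Pop_odd[OF c i] sum_take_Pop_even[OF c] i by (auto simp: sources_def letter_def)
qed

lemma terminals_Pop:
  assumes c: "c \<in> ternary_words (s - 1)"
  shows "terminals (offset (word_degree c) (interleave s k)) = lower_point ` (\<Union>i \<le> s. sources c i)"
proof -
  let ?L = "offset (word_degree c) (interleave s k)"
  have "{..s} = insert 0 (Suc ` {..<s})"
    by (simp add: lessThan_Suc_atMost[symmetric] lessThan_Suc_eq_insert_0)
  then have "(\<Union>i \<le> s. sources c i) = insert 0 (\<Union>i < s. sources c (Suc i))"
    by (simp add: sources_def letter_def)
  also have "\<dots> = (\<lambda>l. sum_list (take l ?L)) ` {..2 * s - 1}"
    unfolding atMost_odd_even_split by (simp add: sources_Suc_partial_sums[OF c] image_UN)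
  finally have "partial_sums ?L = (\<Union>i \<le> s. sources c i)" by (simp add: partial_sums_def)
  moreover have "sum_list ?L = top_level - 1"
    using sum_take_Pop_odd[OF c, of "s - 1"] s_pos by (simp add: top_level_def)
  ultimately show ?thesis by (auto simp: terminals_partial_sums lower_point_def)
qed

definition word_edges :: "nat list \<Rightarrow> (vert \<times> vert) set" where
  "word_edges c = (\<Union>i \<le> s. (\<lambda>x. (lower_point x, terminal i)) ` sources c i)"

lemma inj_lower_point: "inj lower_point"
  by (auto simp: inj_def lower_point_def)

definition entries :: "(vert \<times> vert) set \<Rightarrow> nat \<Rightarrow> nat set" where
  "entries E i = {x. (lower_point x, terminal i) \<in> E}"

lemma in_edges_terminalsE:
  assumes "e \<in> in_edges (terminal ` {..s})"
  obtains i x where "i \<le> s" "e = (lower_point x, terminal i)"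
    "(0 < i \<and> x = terminal_x i - 1) \<or> (i < s \<and> x = terminal_x i)"
proof -
  obtain i where i: "i \<le> s" "snd e = terminal i" "Qplus_edge (fst e) (terminal i)"
    using assms by (auto simp: in_edges_def)
  then consider "0 < i" "fst e = lower_point (terminal_x i - 1)" | "i < s" "fst e = lower_point (terminal_x i)"
    using Qplus_edge_terminal[OF i(1)] by blast
  then show ?thesis
  proof cases
    case 1
    then show ?thesis using that[of i "terminal_x i - 1"] i(1,2) by (simp add: prod_eq_iff)
  next
    case 2
    then show ?thesis using that[of i "terminal_x i"] i(1,2) by (simp add: prod_eq_iff)
  qed
qed

lemma in_edges_terminals_eqI:
  assumes "E \<subseteq> in_edges (terminal ` {..s})" "E' \<subseteq> in_edges (terminal ` {..s})"
    and "\<And>i. i \<le> s \<Longrightarrow> entries E i = entries E' i"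
  shows "E = E'"
proof -
  have "e \<in> B" if "e \<in> A" "A \<subseteq> in_edges (terminal ` {..s})"
    "\<And>i. i \<le> s \<Longrightarrow> entries A i = entries B i" for e A B
  proof -
    from that(1,2) have "e \<in> in_edges (terminal ` {..s})" by blast
    then obtain i x where "i \<le> s" "e = (lower_point x, terminal i)" by (rule in_edges_terminalsE)
    then show "e \<in> B" using that(1,3) by (auto simp: entries_def)
  qed
  then show ?thesis using assms by (intro equalityI subsetI) metis+
qed

lemma entries_word_edges:
  assumes "i \<le> s"
  shows "entries (word_edges c) i = sources c i"
proof (intro set_eqI iffI)
  fix x assume "x \<in> entries (word_edges c) i"
  then obtain j y where j: "j \<le> s" "y \<in> sources c j" "lower_point x = lower_point y"
    "terminal i = terminal j"
    by (auto simp: entries_def word_edges_def)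
  then have "i = j" using inj_onD[OF inj_on_terminal] assms by blast
  moreover have "x = y" using injD[OF inj_lower_point j(3)] .
  ultimately show "x \<in> sources c i" using j(2) by simp
qed (use assms in \<open>auto simp: entries_def word_edges_def\<close>)

lemma word_edges_subset_in_edges: "word_edges c \<subseteq> in_edges (terminal ` {..s})"
proof
  fix e assume "e \<in> word_edges c"
  then obtain i x where "i \<le> s" "x \<in> sources c i" "e = (lower_point x, terminal i)"
    by (auto simp: word_edges_def)
  then show "e \<in> in_edges (terminal ` {..s})"
    using s_pos by (auto simp: in_edges_def Qplus_edge_terminal sources_def letter_def split: if_splits)
qed

lemma word_edges_covering: "word_edges c \<in> covering_in_edges (terminal ` {..s})"
proof -
  have "terminal i \<in> snd ` word_edges c" if i: "i \<le> s" for i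
  proof -
    have "sources c i \<noteq> {}" by (simp add: sources_def)
    then obtain x where "x \<in> entries (word_edges c) i" using entries_word_edges[OF i] by blast
    then show ?thesis by (force simp: entries_def)
  qed
  then show ?thesis using word_edges_subset_in_edges by (auto simp: covering_in_edges_def)
qed

lemma letter_in_ternary: "c \<in> ternary_words (s - 1) \<Longrightarrow> i \<le> s \<Longrightarrow> letter c i \<in> {0, 1, 2}"
  using ternary_words_nth[of c "s - 1" "i - 1"] by (simp add: letter_def)

lemma letter_eq_if_sources_eq:
  assumes "0 < i" "i \<le> s" "letter c i \<in> {0, 1, 2}" "letter c' i \<in> {0, 1, 2}"
    "sources c i = sources c' i"
  shows "letter c i = letter c' i"
proof -
  have "terminal_x i - 1 \<noteq> terminal_x i" using terminal_x_pos[OF assms(1,2)] by simp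
  then show ?thesis using assms(3-5) by (auto simp: sources_def split: if_splits)
qed

lemma inj_on_word_edges: "inj_on word_edges (ternary_words (s - 1))"
proof (rule inj_onI)
  fix c c' assume c: "c \<in> ternary_words (s - 1)" and c': "c' \<in> ternary_words (s - 1)"
    and eq: "word_edges c = word_edges c'"
  show "c = c'"
  proof (rule nth_equalityI)
    show "length c = length c'" using c c' by (simp add: ternary_words_length)
    fix j assume "j < length c"
    then have j: "0 < Suc j" "Suc j \<le> s" "Suc j \<noteq> s" using c by (auto simp: ternary_words_length)
    have "sources c (Suc j) = sources c' (Suc j)"
      using entries_word_edges[OF j(2)] eq by metis
    then have "letter c (Suc j) = letter c' (Suc j)"
      using letter_eq_if_sources_eq[OF j(1,2)] letter_in_ternary[OF c j(2)] letter_in_ternary[OF c' j(2)]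
      by blast
    then show "c ! j = c' ! j" using j(3) by (simp add: letter_def)
  qed
qed

lemma entries_covering:
  assumes "E \<in> covering_in_edges (terminal ` {..s})" "i \<le> s"
  shows "entries E i \<noteq> {}"
    and "entries E i \<subseteq> (if 0 < i then {terminal_x i - 1} else {}) \<union> (if i < s then {terminal_x i} else {})"
      (is "_ \<subseteq> ?allowed")
proof -
  have E: "E \<subseteq> in_edges (terminal ` {..s})" using assms(1) by (simp add: covering_in_edges_def)
  have "terminal i \<in> snd ` E" using assms by (auto simp: covering_in_edges_def)
  then obtain e where "e \<in> E" "terminal i = snd e" by blast
  with E obtain j x where "j \<le> s" "e = (lower_point x, terminal j)" by (blast elim: in_edges_terminalsE)
  then show "entries E i \<noteq> {}"
    using \<open>e \<in> E\<close> \<open>terminal i = snd e\<close> by (auto simp: entries_def)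
  show "entries E i \<subseteq> ?allowed"
  proof
    fix x assume "x \<in> entries E i"
    then have "(lower_point x, terminal i) \<in> in_edges (terminal ` {..s})" using E by (auto simp: entries_def)
    then obtain j y where "j \<le> s" "(lower_point x, terminal i) = (lower_point y, terminal j)"
      "(0 < j \<and> y = terminal_x j - 1) \<or> (j < s \<and> y = terminal_x j)"
      by (rule in_edges_terminalsE)
    moreover have "j = i" using calculation(1,2) assms(2) inj_onD[OF inj_on_terminal] by auto
    ultimately show "x \<in> ?allowed"
      using injD[OF inj_lower_point] by auto
  qed
qed

lemma covering_in_edges_word_edges:
  assumes E: "E \<in> covering_in_edges (terminal ` {..s})"
  shows "E \<in> word_edges ` ternary_words (s - 1)"
proof -
  define c where "c = map (\<lambda>j. if terminal_x (Suc j) - 1 \<notin> entries E (Suc j) then 0 :: nat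
    else if terminal_x (Suc j) \<notin> entries E (Suc j) then 1 else 2) [0..<s - 1]"
  have "sources c i = entries E i" if i: "i \<le> s" for i
  proof -
    note entries = entries_covering[OF E i]
    consider "i = 0" | "i = s" | "0 < i" "i < s" using i by linarith
    then show ?thesis
    proof cases
      case 3
      then have "letter c i = (if terminal_x i - 1 \<notin> entries E i then 0
          else if terminal_x i \<notin> entries E i then 1 else 2)"
        by (simp add: letter_def c_def)
      moreover have "terminal_x i - 1 \<noteq> terminal_x i" using terminal_x_pos[of i] 3 by simp
      ultimately show ?thesis using entries 3 by (auto simp: sources_def)
    qed (use entries s_pos in \<open>auto simp: sources_def letter_def\<close>)
  qed
  then have "E = word_edges c"
    using E word_edges_subset_in_edges entries_word_edges
    by (intro in_edges_terminals_eqI) (auto simp: covering_in_edges_def)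
  moreover have "c \<in> ternary_words (s - 1)" by (auto simp: c_def ternary_words_def)
  ultimately show ?thesis by blast
qed

lemma covering_in_edges_terminals:
  "covering_in_edges (terminal ` {..s}) = word_edges ` ternary_words (s - 1)"
  using covering_in_edges_word_edges word_edges_covering by blast

lemma fst_word_edges: "fst ` word_edges c = lower_point ` (\<Union>i \<le> s. sources c i)"
  by (auto simp: word_edges_def image_UN image_image)

lemma card_word_edges:
  assumes c: "c \<in> ternary_words (s - 1)"
  shows "card (word_edges c) = Suc s + count_y c"
proof -
  have card_sources: "card (sources c i) = 1 + (if letter c i = 2 then 1 else 0)" if "i \<le> s" for i
  proof -
    have "letter c i = 2 \<Longrightarrow> terminal_x i - 1 \<noteq> terminal_x i"
      using terminal_x_pos[OF _ that] by (cases "i = 0") (auto simp: letter_def)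
    then show ?thesis using letter_in_ternary[OF c that] by (auto simp: sources_def)
  qed
  have "{i \<in> {..s}. letter c i = 2} = Suc ` {j. j < length c \<and> c ! j = 2}"
  proof (intro set_eqI iffI)
    fix i assume "i \<in> {i \<in> {..s}. letter c i = 2}"
    then have "0 < i" "i < s" "c ! (i - 1) = 2" by (auto simp: letter_def split: if_splits)
    then show "i \<in> Suc ` {j. j < length c \<and> c ! j = 2}"
      using ternary_words_length[OF c] by (intro rev_image_eqI[of "i - 1"]) auto
  qed (use ternary_words_length[OF c] in \<open>auto simp: letter_def\<close>)
  then have "(\<Sum>i \<le> s. if letter c i = 2 then 1 else 0) = count_y c"
    using sum.inter_filter[of "{..s}" "\<lambda>_. 1 :: nat" "\<lambda>i. letter c i = 2"]
    by (simp add: card_image count_y_def length_filter_conv_card)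
  moreover have "card (word_edges c) = (\<Sum>i \<le> s. card ((\<lambda>x. (lower_point x, terminal i)) ` sources c i))"
    unfolding word_edges_def
  proof (rule card_UN_disjoint)
    show "\<forall>i \<in> {..s}. \<forall>j \<in> {..s}. i \<noteq> j \<longrightarrow>
        (\<lambda>x. (lower_point x, terminal i)) ` sources c i \<inter> (\<lambda>x. (lower_point x, terminal j)) ` sources c j = {}"
      using inj_onD[OF inj_on_terminal] by blast
  qed (auto simp: sources_def)
  moreover have "card ((\<lambda>x. (lower_point x, terminal i)) ` sources c i) = card (sources c i)" for i
    by (rule card_image) (auto simp: inj_on_def dest: injD[OF inj_lower_point])
  moreover have "(\<Sum>i \<le> s. card (sources c i)) = (\<Sum>i \<le> s. 1) + (\<Sum>i \<le> s. if letter c i = 2 then 1 else 0)"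
    unfolding sum.distrib[symmetric] by (rule sum.cong) (simp_all add: card_sources)
  ultimately show ?thesis by simp
qed

lemma card_terminals: "card (terminal ` {..s}) = Suc s"
  using card_image[OF inj_on_terminal] by simp

lemma fpoly_top_level_expansion:
  "fpoly (offset (\<lambda>q. if even q \<and> q < 2 * s then 1 else 0) (interleave s k))
    = (\<Sum>c \<in> ternary_words (s - 1). monom 1 (count_y c) * fpoly (offset (word_degree c) (interleave s k)))"
proof -
  have "0 < top_level" using terminal_x_pos[OF s_pos] by (simp add: top_level_def)
  then have "face_poly (terminal ` {..s}) = (\<Sum>E \<in> covering_in_edges (terminal ` {..s}).
      monom 1 (card E - card (terminal ` {..s})) * face_poly (fst ` E))"
    using face_poly_top_level[of "terminal ` {..s}" top_level] level_terminal by auto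
  also have "\<dots> = (\<Sum>c \<in> ternary_words (s - 1).
      monom 1 (card (word_edges c) - card (terminal ` {..s})) * face_poly (fst ` word_edges c))"
    unfolding covering_in_edges_terminals by (rule sum.reindex[OF inj_on_word_edges, unfolded comp_def])
  finally show ?thesis
    by (simp add: fpoly_eq_face_poly terminals_Dx terminals_Pop fst_word_edges card_word_edges
        card_terminals cong: sum.cong)
qed

end

lemma map_poly_of_int_sum_monom:
  "map_poly (of_int :: int \<Rightarrow> 'a :: comm_ring_1) (\<Sum>x \<in> A. monom 1 (n x) * p x)
    = (\<Sum>x \<in> A. [:0, 1:] ^ n x * map_poly of_int (p x))" (is "?l = ?r")
proof (rule poly_eqI)
  have X: "([:0, 1:] :: 'a poly) ^ m = monom 1 m" for m by (simp add: monom_altdef)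
  show "coeff ?l i = coeff ?r i" for i
    unfolding X by (auto simp: coeff_map_poly coeff_sum coeff_monom_mult of_int_sum intro!: sum.cong)
qed

theorem theorem1p2:
  fixes s :: nat
  assumes "0 < s"
  shows "yzero s (Dop s (Psi (2 * s - 1))) = (\<lambda>_. 0)"
proof
  fix k :: "nat list"
  show "yzero s (Dop s (Psi (2 * s - 1))) k = 0"
  proof (cases "length k = s")
    case True
    let ?K = "interleave s k"
    have "map_poly (of_int :: int \<Rightarrow> rat) (fpoly (offset (\<lambda>q. if even q \<and> q < 2 * s then 1 else 0) ?K))
        = (\<Sum>c \<in> ternary_words (s - 1).
            [:0, 1:] ^ count_y c * map_poly of_int (fpoly (offset (word_degree c) ?K)))"
      unfolding fpoly_top_level_expansion[OF assms True] by (rule map_poly_of_int_sum_monom)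
    then have "Dx s (Psi (2 * s - 1)) ?K = Pop s (Psi (2 * s - 1)) ?K"
      using Dx_Psi[OF assms] Pop_Psi[OF assms] by (simp add: fact_scaled_def)
    then show ?thesis using True by (simp add: yzero_def Dop_def interleave_def)
  qed (simp add: yzero_def)
qed

end
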